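(* Let $G$ be a graph on $d+2$ vertices with adjacency matrix $A_G$ having eigenvalues $\lambda_1\geq\lambda_2\geq\dots\geq\lambda_{d+2}$, and let $k>1$ with $\overline{B_G}=\frac{1}{k^2-1}I-A_G$. Suppose that $w^T\overline{B_G}w\geq 0$ for all $w\in\mathbf{1}^\perp$, that there exist a nonzero $w\in\mathbf{1}^\perp$ and a real $\gamma$ with $\overline{B_G}w=\gamma\mathbf{1}$, and that $\det(\overline{B_G})=0$. Then there exists an eigenvector $v_2$ of $A_G$ with eigenvalue $\lambda_2$ that is orthogonal to $\mathbf{1}$.
   Context: Graphs are finite and simple; $\mathbf{1}$ is the all-ones vector and $\mathbf{1}^\perp$ its orthogonal complement. *)

theory Defs
  imports "HOL-Analysis.Analysis"
begin

definition simple_graph :: "('n \<Rightarrow> 'n \<Rightarrow> bool) \<Rightarrow> bool" where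
  "simple_graph E \<longleftrightarrow> (\<forall>i j. E i j \<longleftrightarrow> E j i) \<and> (\<forall>i. \<not> E i i)"

definition adj_matrix :: "('n::finite \<Rightarrow> 'n \<Rightarrow> bool) \<Rightarrow> real^'n^'n" where
  "adj_matrix E = (\<chi> i j. if E i j then 1 else 0)"

definition ones :: "real^'n::finite" where
  "ones = (\<chi> i. 1)"

definition sorted_eigenvalues :: "real^'n^'n \<Rightarrow> (nat \<Rightarrow> real) \<Rightarrow> bool" where
  "sorted_eigenvalues M lam \<longleftrightarrow>
     (\<forall>i j. i \<le> j \<longrightarrow> j < CARD('n) \<longrightarrow> lam j \<le> lam i) \<and>
     (\<forall>x. det (x *\<^sub>R mat 1 - M) = (\<Prod>i<CARD('n). (x - lam i)))"

end

theory Submission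
  imports Defs
begin

text \<open>Write c = 1 / (k^2 - 1) and A for the adjacency matrix; eigenvalues are indexed
  from 0, so lam 1 is the paper's \<lambda>_2. Since c I - A is symmetric and singular, the vector
  w with (c I - A) w = \<gamma> 1 yields an eigenvector v of A for c orthogonal to 1: w itself if
  \<gamma> = 0, otherwise any kernel vector of c I - A. It remains to show c = lam 1.
  The plane spanned by orthogonal eigenvectors for lam 0 and lam 1 meets the hyperplane
  orthogonal to 1, where the quadratic form of A is at most c by hypothesis; hence lam 1 \<le> c.
  Conversely c is an eigenvalue, and if it were lam 0 > lam 1, then (A being nonnegative) |v|
  would also maximise the Rayleigh quotient and so be an eigenvector; |v| + v and |v| - v would be
  orthogonal eigenvectors for lam 0, both nonzero because v has entries of both signs, although
  lam 0 is a simple root.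
  Algebraic and geometric multiplicities are compared through a bordered determinant: replacing a
  row of x I - M by a left eigenvector u for \<mu> divides the characteristic polynomial by x - \<mu>,
  and the quotient vanishes at \<mu> iff some eigenvector for \<mu> is orthogonal to u.\<close>

lemma det_eq_0_iff_nontrivial_kernel:
  fixes A :: "real^'n::finite^'n"
  shows "det A = 0 \<longleftrightarrow> (\<exists>x. x \<noteq> 0 \<and> A *v x = 0)"
  using det_eq_0_rank matrix_nonfull_linear_equations_eq rank_bound[of A] by fastforce

lemma scaleR_mat_1_diff_mult:
  fixes M :: "real^'n::finite^'n"
  shows "(a *\<^sub>R mat 1 - M) *v v = a *\<^sub>R v - M *v v"
  by (simp add: matrix_vector_mult_diff_rdistrib scaleR_matrix_vector_assoc[symmetric])

lemma det_eq_0_iff_eigenvector: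
  fixes M :: "real^'n::finite^'n"
  shows "det (a *\<^sub>R mat 1 - M) = 0 \<longleftrightarrow> (\<exists>v. v \<noteq> 0 \<and> M *v v = a *\<^sub>R v)"
  unfolding det_eq_0_iff_nontrivial_kernel scaleR_mat_1_diff_mult by (metis eq_iff_diff_eq_0)

lemma continuous_on_det:
  fixes A :: "'a::topological_space \<Rightarrow> real^'n::finite^'n"
  assumes "\<And>i j. continuous_on S (\<lambda>x. A x $ i $ j)"
  shows "continuous_on S (\<lambda>x. det (A x))"
  unfolding det_def by (intro continuous_intros assms)

lemma det_replace_row_vector_matrix_mult:
  fixes A :: "'a::comm_ring_1^'n::finite^'n"
  shows "det (\<chi> i. if i = k then u v* A else row i A) = u $ k * det A"
proof -
  have "u v* A = (\<Sum>j\<in>UNIV. u $ j *s row j A)"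
    by (simp add: vec_eq_iff vector_matrix_mult_def row_def mult.commute)
  then have "det (\<chi> i. if i = k then u v* A else row i A)
      = det (\<chi> i. if i = k then (\<Sum>j\<in>UNIV. u $ j *s row j A) else row i A)"
    by (simp only:)
  also have "\<dots> = (\<Sum>j\<in>UNIV. det (\<chi> i. if i = k then u $ j *s row j A else row i A))"
    by (rule det_linear_row_sum) simp
  also have "\<dots> = (\<Sum>j\<in>UNIV. u $ j * det (\<chi> i. if i = k then row j A else row i A))"
    by (simp add: det_row_mul)
  also have "\<dots> = u $ k * det (\<chi> i. if i = k then row k A else row i A)"
  proof -
    have "u $ j * det (\<chi> i. if i = k then row j A else row i A) = 0" if "j \<noteq> k" for j
      using that by (subst det_identical_rows[of k j]) (auto simp: row_def)
    then show ?thesis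
      by (subst sum.remove[of UNIV k]) (auto intro: sum.neutral)
  qed
  also have "(\<chi> i. if i = k then row k A else row i A) = A"
    by (simp add: vec_eq_iff row_def)
  finally show ?thesis .
qed

lemma replace_row_by_left_null_vector_kernel:
  fixes B :: "real^'n::finite^'n"
  assumes "u v* B = 0" "u $ k \<noteq> 0"
  shows "(\<chi> i. if i = k then u else row i B) *v z = 0 \<longleftrightarrow> B *v z = 0 \<and> u \<bullet> z = 0"
proof -
  have component: "((\<chi> i. if i = k then u else row i B) *v z) $ i
      = (if i = k then u \<bullet> z else (B *v z) $ i)" for i
    by (simp add: matrix_vector_mult_def row_def inner_vec_def mult.commute)
  have "u \<bullet> (B *v z) = 0"
    using assms(1) by (simp flip: dot_lmul_matrix)
  then have "u $ k * (B *v z) $ k = 0" if "\<forall>i. i \<noteq> k \<longrightarrow> (B *v z) $ i = 0"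
    using that by (simp add: inner_vec_def sum.remove[of UNIV k])
  then show ?thesis
    using assms(2) by (auto simp: vec_eq_iff component)
qed

lemma charpoly_deflation:
  fixes M :: "real^'n::finite^'n"
  assumes left_eigen: "u v* M = \<mu> *\<^sub>R u" and "u \<noteq> 0"
  obtains g where "continuous_on UNIV g" "\<And>x. det (x *\<^sub>R mat 1 - M) = (x - \<mu>) * g x"
    "g \<mu> = 0 \<longleftrightarrow> (\<exists>z. z \<noteq> 0 \<and> M *v z = \<mu> *\<^sub>R z \<and> u \<bullet> z = 0)"
proof -
  obtain k where uk: "u $ k \<noteq> 0"
    using \<open>u \<noteq> 0\<close> by (auto simp: vec_eq_iff)
  define N where "N x = (\<chi> i. if i = k then u else row i (x *\<^sub>R mat 1 - M))" for x
  define g where "g x = det (N x) / u $ k" for x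
  have left_charmat: "u v* (x *\<^sub>R mat 1 - M) = (x - \<mu>) *\<^sub>R u" for x
    by (simp add: vector_matrix_mult_diff_rdistrib vector_scaleR_matrix_ac left_eigen
        scaleR_diff_left)
  have cont: "continuous_on UNIV g"
    unfolding g_def
  proof (intro continuous_on_divide continuous_on_det continuous_on_const)
    show "continuous_on UNIV (\<lambda>x. N x $ i $ j)" for i j
      by (cases "i = k"; cases "i = j") (simp_all add: N_def row_def mat_def continuous_on_diff)
  qed (use uk in simp)
  have factor: "det (x *\<^sub>R mat 1 - M) = (x - \<mu>) * g x" for x
  proof -
    have "(x - \<mu>) * det (N x) = det (\<chi> i. if i = k then (x - \<mu>) *s u else row i (x *\<^sub>R mat 1 - M))"
      by (simp add: N_def det_row_mul)
    also have "\<dots> = u $ k * det (x *\<^sub>R mat 1 - M)"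
      using det_replace_row_vector_matrix_mult[of k u "x *\<^sub>R mat 1 - M"]
      unfolding left_charmat scalar_mult_eq_scaleR .
    finally show ?thesis
      using uk by (simp add: g_def field_simps)
  qed
  have "g \<mu> = 0 \<longleftrightarrow> (\<exists>z. z \<noteq> 0 \<and> N \<mu> *v z = 0)"
    using uk by (simp add: g_def det_eq_0_iff_nontrivial_kernel)
  also have "\<dots> \<longleftrightarrow> (\<exists>z. z \<noteq> 0 \<and> (\<mu> *\<^sub>R mat 1 - M) *v z = 0 \<and> u \<bullet> z = 0)"
    using replace_row_by_left_null_vector_kernel[OF _ uk] left_charmat[of \<mu>]
    by (simp add: N_def)
  also have "\<dots> \<longleftrightarrow> (\<exists>z. z \<noteq> 0 \<and> M *v z = \<mu> *\<^sub>R z \<and> u \<bullet> z = 0)"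
    by (simp add: scaleR_mat_1_diff_mult eq_commute[of "\<mu> *\<^sub>R _"])
  finally show ?thesis
    using that[OF cont factor] by blast
qed

lemma continuous_on_eq_at_point:
  fixes g h :: "real \<Rightarrow> real"
  assumes "continuous_on UNIV g" "continuous_on UNIV h" "\<And>x. x \<noteq> a \<Longrightarrow> g x = h x"
  shows "g a = h a"
proof -
  have "(h \<longlongrightarrow> h a) (at a)"
    using assms(2) by (simp add: continuous_on_def)
  then have "(g \<longlongrightarrow> h a) (at a)"
    by (rule Lim_transform_eventually) (auto simp: eventually_at_filter assms(3))
  moreover have "(g \<longlongrightarrow> g a) (at a)"
    using assms(1) by (simp add: continuous_on_def)
  ultimately show ?thesis
    using tendsto_unique trivial_limit_at by metis
qed

lemma eigenvector_orthogonal_to_left_eigenvector_iff_double_root: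
  fixes M :: "real^'n::finite^'n"
  assumes charpoly: "\<And>x. det (x *\<^sub>R mat 1 - M) = (\<Prod>i<CARD('n). x - lam i)"
    and "u v* M = \<mu> *\<^sub>R u" "u \<noteq> 0"
  shows "(\<exists>z. z \<noteq> 0 \<and> M *v z = \<mu> *\<^sub>R z \<and> u \<bullet> z = 0)
    \<longleftrightarrow> (\<exists>i<CARD('n). \<exists>j<CARD('n). i \<noteq> j \<and> lam i = \<mu> \<and> lam j = \<mu>)"
proof -
  obtain g where g_cont: "continuous_on UNIV g"
    and factor: "\<And>x. det (x *\<^sub>R mat 1 - M) = (x - \<mu>) * g x"
    and g_zero: "g \<mu> = 0 \<longleftrightarrow> (\<exists>z. z \<noteq> 0 \<and> M *v z = \<mu> *\<^sub>R z \<and> u \<bullet> z = 0)"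
    using charpoly_deflation assms(2,3) by blast
  have "(\<Prod>i<CARD('n). \<mu> - lam i) = 0"
    using charpoly[of \<mu>] factor[of \<mu>] by simp
  then obtain i where i: "i < CARD('n)" "lam i = \<mu>"
    by auto
  define r where "r x = (\<Prod>j\<in>{..<CARD('n)} - {i}. x - lam j)" for x
  have "g x = r x" if "x \<noteq> \<mu>" for x
    using that charpoly[of x] factor[of x] prod.remove[of "{..<CARD('n)}" i "\<lambda>j. x - lam j"] i
    by (simp add: r_def)
  moreover have "continuous_on UNIV r"
    unfolding r_def by (intro continuous_intros)
  ultimately have "g \<mu> = r \<mu>"
    using continuous_on_eq_at_point[OF g_cont] by blast
  also have "r \<mu> = 0 \<longleftrightarrow> (\<exists>j<CARD('n). j \<noteq> i \<and> lam j = \<mu>)"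
    by (auto simp: r_def)
  finally show ?thesis
    using g_zero i by metis
qed

lemma symmetric_matrix_inner_commute:
  fixes M :: "real^'n::finite^'n"
  assumes "transpose M = M"
  shows "x \<bullet> (M *v y) = (M *v x) \<bullet> y"
  by (metis assms dot_lmul_matrix transpose_matrix_vector)

lemma rayleigh_maximizer_is_eigenvector:
  fixes M :: "real^'n::finite^'n"
  assumes sym: "transpose M = M"
    and bound: "\<And>y. y \<bullet> (M *v y) \<le> \<mu> * (y \<bullet> y)"
    and attained: "x \<bullet> (M *v x) = \<mu> * (x \<bullet> x)"
  shows "M *v x = \<mu> *\<^sub>R x"
proof -
  define m where "m = M *v x - \<mu> *\<^sub>R x"
  define a where "a = m \<bullet> m"
  define b where "b = \<mu> * (m \<bullet> m) - m \<bullet> (M *v m)"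
  have "b \<ge> 0"
    using bound[of m] by (simp add: b_def)
  have quadratic: "t\<^sup>2 * b \<ge> 2 * t * a" for t
  proof -
    have "x \<bullet> (M *v m) = m \<bullet> (M *v x)"
      using symmetric_matrix_inner_commute[OF sym, of x m] by (simp add: inner_commute)
    then show ?thesis
      using bound[of "x + t *\<^sub>R m"] attained unfolding a_def b_def m_def
      by (simp add: matrix_vector_right_distrib matrix_vector_mult_scaleR inner_add_left
          inner_add_right inner_diff_left inner_diff_right algebra_simps power2_eq_square inner_commute)
  qed
  define t where "t = a / (b + 1)"
  have "a = t * (b + 1)"
    using \<open>b \<ge> 0\<close> by (simp add: t_def)
  then have "t\<^sup>2 * (b + 2) \<le> 0"
    using quadratic[of t] by (simp add: algebra_simps power2_eq_square)
  then have "t = 0"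
    using \<open>b \<ge> 0\<close> by (simp add: mult_le_0_iff)
  then have "a = 0"
    by (simp add: \<open>a = t * (b + 1)\<close>)
  then show ?thesis
    by (simp add: a_def m_def)
qed

lemma eigenvalue_is_root:
  fixes M :: "real^'n::finite^'n"
  assumes "\<And>x. det (x *\<^sub>R mat 1 - M) = (\<Prod>i<CARD('n). x - lam i)"
    and "v \<noteq> 0" "M *v v = a *\<^sub>R v"
  obtains i where "i < CARD('n)" "lam i = a"
proof -
  have "(\<Prod>i<CARD('n). a - lam i) = 0"
    using assms det_eq_0_iff_eigenvector by metis
  then show ?thesis
    using that by auto
qed

lemma root_is_eigenvalue:
  fixes M :: "real^'n::finite^'n"
  assumes "\<And>x. det (x *\<^sub>R mat 1 - M) = (\<Prod>i<CARD('n). x - lam i)" and "i < CARD('n)"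
  obtains v where "v \<noteq> 0" "M *v v = lam i *\<^sub>R v"
proof -
  have "det (lam i *\<^sub>R mat 1 - M) = 0"
    using assms by (force simp: prod_zero_iff)
  then show ?thesis
    using that det_eq_0_iff_eigenvector by blast
qed

lemma quadratic_form_le_largest_eigenvalue:
  fixes M :: "real^'n::finite^'n"
  assumes sym: "transpose M = M" and eig: "sorted_eigenvalues M lam"
  shows "y \<bullet> (M *v y) \<le> lam 0 * (y \<bullet> y)"
proof -
  let ?q = "\<lambda>y. y \<bullet> (M *v y)"
  have "sphere (0::real^'n) 1 \<noteq> {}"
    using norm_axis_1 by (metis mem_sphere_0 empty_iff)
  moreover have "continuous_on (sphere 0 1) ?q"
    by (intro continuous_intros linear_continuous_on matrix_vector_mul_linear)
  ultimately obtain x where "x \<in> sphere 0 1" and max: "\<forall>y\<in>sphere 0 1. ?q y \<le> ?q x"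
    using continuous_attains_sup[OF compact_sphere] by blast
  then have x: "norm x = 1"
    by simp
  have bound: "?q y \<le> ?q x * (y \<bullet> y)" for y
  proof (cases "y = 0")
    case False
    have "y /\<^sub>R norm y \<in> sphere 0 1"
      using False by simp
    then have "?q (y /\<^sub>R norm y) \<le> ?q x"
      using max by blast
    moreover have "?q (y /\<^sub>R norm y) = ?q y / (norm y)\<^sup>2"
      by (simp add: matrix_vector_mult_scaleR power2_eq_square divide_inverse inverse_mult_distrib
          mult_ac)
    ultimately show ?thesis
      using False by (simp add: divide_le_eq power2_norm_eq_inner)
  qed simp
  have "M *v x = ?q x *\<^sub>R x"
    using x by (intro rayleigh_maximizer_is_eigenvector[OF sym bound]) (simp add: dot_square_norm)
  moreover have "x \<noteq> 0"
    using x by auto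
  ultimately obtain i where "i < CARD('n)" "lam i = ?q x"
    using eigenvalue_is_root[of M lam] eig unfolding sorted_eigenvalues_def by blast
  then have "?q x \<le> lam 0"
    using eig unfolding sorted_eigenvalues_def by (metis le0)
  then show ?thesis
    using bound[of y] by (meson inner_ge_zero mult_right_mono order_trans)
qed

lemma symmetric_matrix_eigenvectors_orthogonal:
  fixes M :: "real^'n::finite^'n"
  assumes "transpose M = M" "M *v x = a *\<^sub>R x" "M *v y = b *\<^sub>R y" "a \<noteq> b"
  shows "x \<bullet> y = 0"
proof -
  have "b * (x \<bullet> y) = a * (x \<bullet> y)"
    using symmetric_matrix_inner_commute[OF assms(1), of x y] assms(2,3) by simp
  then show ?thesis
    using assms(4) by simp
qed

lemma exists_orthogonal_vector_quadratic_form_ge: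
  fixes A :: "real^'n::finite^'n"
  assumes "x \<noteq> 0" "y \<noteq> 0" "x \<bullet> y = 0" "A *v x = a *\<^sub>R x" "A *v y = b *\<^sub>R y"
    and "L \<le> a" "L \<le> b"
  obtains z where "z \<noteq> 0" "z \<bullet> e = 0" "L * (z \<bullet> z) \<le> z \<bullet> (A *v z)"
proof (cases "x \<bullet> e = 0")
  case True
  have "L * (x \<bullet> x) \<le> a * (x \<bullet> x)"
    using assms(6) by (simp add: mult_right_mono)
  then show ?thesis
    using that[of x] True assms(1,4) by simp
next
  case False
  define \<alpha> where "\<alpha> = y \<bullet> e"
  define \<beta> where "\<beta> = - (x \<bullet> e)"
  define z where "z = \<alpha> *\<^sub>R x + \<beta> *\<^sub>R y"
  have yx: "y \<bullet> x = 0"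
    using assms(3) by (simp add: inner_commute)
  have zz: "z \<bullet> z = \<alpha>\<^sup>2 * (x \<bullet> x) + \<beta>\<^sup>2 * (y \<bullet> y)"
    using assms(3) yx by (simp add: z_def inner_add_left inner_add_right power2_eq_square algebra_simps)
  have zAz: "z \<bullet> (A *v z) = \<alpha>\<^sup>2 * a * (x \<bullet> x) + \<beta>\<^sup>2 * b * (y \<bullet> y)"
    using assms(3-5) yx by (simp add: z_def inner_add_left inner_add_right matrix_vector_right_distrib
        matrix_vector_mult_scaleR power2_eq_square algebra_simps)
  have "z \<bullet> e = 0"
    by (simp add: z_def \<alpha>_def \<beta>_def inner_add_left algebra_simps)
  moreover have "z \<noteq> 0"
  proof -
    have "\<beta>\<^sup>2 * (y \<bullet> y) > 0"
      using False assms(2) by (simp add: \<beta>_def)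
    moreover have "\<alpha>\<^sup>2 * (x \<bullet> x) \<ge> 0"
      by simp
    ultimately have "z \<bullet> z > 0"
      unfolding zz by linarith
    then show ?thesis
      by auto
  qed
  moreover have "L * (z \<bullet> z) \<le> z \<bullet> (A *v z)"
  proof -
    have "L * (\<alpha>\<^sup>2 * (x \<bullet> x)) \<le> a * (\<alpha>\<^sup>2 * (x \<bullet> x))"
      using assms(6) by (intro mult_right_mono) auto
    moreover have "L * (\<beta>\<^sup>2 * (y \<bullet> y)) \<le> b * (\<beta>\<^sup>2 * (y \<bullet> y))"
      using assms(7) by (intro mult_right_mono) auto
    ultimately show ?thesis
      unfolding zz zAz by (simp add: algebra_simps)
  qed
  ultimately show ?thesis
    using that by blast
qed

lemma exists_orthogonal_vector_quadratic_form_ge_second_eigenvalue: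
  fixes M :: "real^'n::finite^'n"
  assumes sym: "transpose M = M" and eig: "sorted_eigenvalues M lam" and "2 \<le> CARD('n)"
  obtains z where "z \<noteq> 0" "z \<bullet> e = 0" "lam 1 * (z \<bullet> z) \<le> z \<bullet> (M *v z)"
proof -
  have charpoly: "\<And>x. det (x *\<^sub>R mat 1 - M) = (\<Prod>i<CARD('n). x - lam i)"
    and "lam 1 \<le> lam 0"
    using eig \<open>2 \<le> CARD('n)\<close> by (auto simp: sorted_eigenvalues_def)
  obtain x where x: "x \<noteq> 0" "M *v x = lam 0 *\<^sub>R x"
    using root_is_eigenvalue[OF charpoly, of 0] \<open>2 \<le> CARD('n)\<close> by auto
  obtain y where y: "y \<noteq> 0" "M *v y = lam 1 *\<^sub>R y" "x \<bullet> y = 0"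
  proof (cases "lam 1 = lam 0")
    case True
    have left: "x v* M = lam 0 *\<^sub>R x"
      using sym x(2) by (metis transpose_matrix_vector)
    have "0 < CARD('n)" "1 < CARD('n)"
      using \<open>2 \<le> CARD('n)\<close> by auto
    then have "\<exists>i<CARD('n). \<exists>j<CARD('n). i \<noteq> j \<and> lam i = lam 0 \<and> lam j = lam 0"
      using True zero_neq_one by blast
    then obtain y where "y \<noteq> 0" "M *v y = lam 0 *\<^sub>R y" "x \<bullet> y = 0"
      using eigenvector_orthogonal_to_left_eigenvector_iff_double_root[OF charpoly left x(1)] by blast
    then show ?thesis
      using True that by simp
  next
    case False
    obtain y where "y \<noteq> 0" "M *v y = lam 1 *\<^sub>R y"
      using root_is_eigenvalue[OF charpoly, of 1] \<open>2 \<le> CARD('n)\<close> by auto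
    moreover have "x \<bullet> y = 0"
      using symmetric_matrix_eigenvectors_orthogonal[OF sym x(2) \<open>M *v y = lam 1 *\<^sub>R y\<close>] False
      by simp
    ultimately show ?thesis
      using that by blast
  qed
  show ?thesis
    using exists_orthogonal_vector_quadratic_form_ge[OF x(1) y(1) y(3) x(2) y(2)
        \<open>lam 1 \<le> lam 0\<close> order_refl] that by blast
qed

lemma abs_eigenvector_of_maximal_quadratic_form:
  fixes A :: "real^'n::finite^'n"
  assumes sym: "transpose A = A" and nonneg: "\<And>i j. A $ i $ j \<ge> 0"
    and bound: "\<And>y. y \<bullet> (A *v y) \<le> \<mu> * (y \<bullet> y)" and "A *v v = \<mu> *\<^sub>R v"
  shows "A *v (\<chi> i. \<bar>v $ i\<bar>) = \<mu> *\<^sub>R (\<chi> i. \<bar>v $ i\<bar>)"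
proof (rule rayleigh_maximizer_is_eigenvector[OF sym bound])
  let ?p = "\<chi> i. \<bar>v $ i\<bar>"
  have "v \<bullet> (A *v v) = (\<Sum>i\<in>UNIV. \<Sum>j\<in>UNIV. v $ i * A $ i $ j * v $ j)"
    by (simp add: inner_vec_def matrix_vector_mult_def sum_distrib_left mult.assoc)
  also have "\<dots> \<le> (\<Sum>i\<in>UNIV. \<Sum>j\<in>UNIV. \<bar>v $ i\<bar> * A $ i $ j * \<bar>v $ j\<bar>)"
  proof (intro sum_mono)
    fix i j
    have "v $ i * A $ i $ j * v $ j \<le> \<bar>v $ i * A $ i $ j * v $ j\<bar>"
      by simp
    also have "\<dots> = \<bar>v $ i\<bar> * A $ i $ j * \<bar>v $ j\<bar>"
      using nonneg[of i j] by (simp add: abs_mult)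
    finally show "v $ i * A $ i $ j * v $ j \<le> \<bar>v $ i\<bar> * A $ i $ j * \<bar>v $ j\<bar>" .
  qed
  also have "\<dots> = ?p \<bullet> (A *v ?p)"
    by (simp add: inner_vec_def matrix_vector_mult_def sum_distrib_left mult.assoc)
  finally have "v \<bullet> (A *v v) \<le> ?p \<bullet> (A *v ?p)" .
  moreover have "v \<bullet> v = ?p \<bullet> ?p"
    by (simp add: inner_vec_def)
  then have "v \<bullet> (A *v v) = \<mu> * (?p \<bullet> ?p)"
    using \<open>A *v v = \<mu> *\<^sub>R v\<close> by simp
  ultimately show "?p \<bullet> (A *v ?p) = \<mu> * (?p \<bullet> ?p)"
    using bound[of ?p] by linarith
qed

lemma abs_add_and_abs_diff_nonzero:
  fixes v :: "real^'n::finite"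
  assumes "v \<noteq> 0" "v \<bullet> ones = 0"
  shows "(\<chi> i. \<bar>v $ i\<bar>) + v \<noteq> 0" "(\<chi> i. \<bar>v $ i\<bar>) - v \<noteq> 0"
proof -
  have sum_zero: "(\<Sum>i\<in>UNIV. v $ i) = 0"
    using assms(2) by (simp add: ones_def inner_vec_def)
  have not_all_zero: "\<not> (\<forall>i. v $ i = 0)"
    using assms(1) by (simp add: vec_eq_iff)
  show "(\<chi> i. \<bar>v $ i\<bar>) + v \<noteq> 0"
  proof
    assume "(\<chi> i. \<bar>v $ i\<bar>) + v = 0"
    then have "\<bar>v $ i\<bar> + v $ i = 0" for i
      by (simp add: vec_eq_iff)
    then have "- v $ i \<ge> 0" for i
      by (metis abs_ge_zero add.commute add_eq_0_iff2)
    then show False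
      using sum_zero not_all_zero sum_nonneg_eq_0_iff[of UNIV "\<lambda>i. - v $ i"] by (simp add: sum_negf)
  qed
  show "(\<chi> i. \<bar>v $ i\<bar>) - v \<noteq> 0"
  proof
    assume "(\<chi> i. \<bar>v $ i\<bar>) - v = 0"
    then have "\<bar>v $ i\<bar> - v $ i = 0" for i
      by (simp add: vec_eq_iff)
    then have "v $ i \<ge> 0" for i
      by (metis abs_ge_zero eq_iff_diff_eq_0)
    then show False
      using sum_zero not_all_zero sum_nonneg_eq_0_iff[of UNIV "\<lambda>i. v $ i"] by simp
  qed
qed

lemma eigenvalue_of_eigenvector_orthogonal_ones_le_second:
  fixes A :: "real^'n::finite^'n"
  assumes sym: "transpose A = A" and nonneg: "\<And>i j. A $ i $ j \<ge> 0"
    and eig: "sorted_eigenvalues A lam"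
    and v: "v \<noteq> 0" "A *v v = \<mu> *\<^sub>R v" "v \<bullet> ones = 0"
  shows "\<mu> \<le> lam 1"
proof -
  have charpoly: "\<And>x. det (x *\<^sub>R mat 1 - A) = (\<Prod>i<CARD('n). x - lam i)"
    and sorted: "\<And>i j. i \<le> j \<Longrightarrow> j < CARD('n) \<Longrightarrow> lam j \<le> lam i"
    using eig by (auto simp: sorted_eigenvalues_def)
  obtain i where i: "i < CARD('n)" "i \<noteq> 0" "lam i = \<mu>"
  proof (cases "\<mu> = lam 0")
    case True
    define p where "p = (\<chi> i. \<bar>v $ i\<bar>)"
    have "A *v p = \<mu> *\<^sub>R p"
      unfolding p_def using quadratic_form_le_largest_eigenvalue[OF sym eig] True v(2)
      by (intro abs_eigenvector_of_maximal_quadratic_form[OF sym nonneg]) auto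
    then have plus: "A *v (p + v) = \<mu> *\<^sub>R (p + v)" and minus: "A *v (p - v) = \<mu> *\<^sub>R (p - v)"
      using v(2) by (simp_all add: matrix_vector_right_distrib matrix_vector_mult_diff_distrib
          scaleR_add_right scaleR_diff_right)
    have "(p + v) v* A = \<mu> *\<^sub>R (p + v)"
      using sym plus by (metis transpose_matrix_vector)
    moreover have "(p + v) \<bullet> (p - v) = 0"
      by (simp add: p_def inner_vec_def algebra_simps power2_eq_square flip: sum_subtractf)
    ultimately have "\<exists>i<CARD('n). \<exists>j<CARD('n). i \<noteq> j \<and> lam i = \<mu> \<and> lam j = \<mu>"
      using eigenvector_orthogonal_to_left_eigenvector_iff_double_root[OF charpoly]
        abs_add_and_abs_diff_nonzero[OF v(1,3), folded p_def] minus by blast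
    then obtain i j where "i < CARD('n)" "j < CARD('n)" "i \<noteq> j" "lam i = \<mu>" "lam j = \<mu>"
      by blast
    then show ?thesis
      using that by (cases "i = 0") auto
  next
    case False
    obtain i where "i < CARD('n)" "lam i = \<mu>"
      using eigenvalue_is_root[OF charpoly v(1,2)] by blast
    then show ?thesis
      using False that by auto
  qed
  then show ?thesis
    using sorted[of 1 i] by simp
qed

lemma symmetric_singular_kernel_meets_hyperplane:
  fixes B :: "real^'n::finite^'n"
  assumes sym: "transpose B = B" and "det B = 0"
    and w: "w \<noteq> 0" "w \<bullet> e = 0" "B *v w = \<gamma> *\<^sub>R e"
  obtains v where "v \<noteq> 0" "B *v v = 0" "v \<bullet> e = 0"
proof (cases "\<gamma> = 0")
  case True
  then show ?thesis
    using that w by simp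
next
  case False
  obtain u where u: "u \<noteq> 0" "B *v u = 0"
    using \<open>det B = 0\<close> det_eq_0_iff_nontrivial_kernel by blast
  have "\<gamma> * (u \<bullet> e) = (B *v u) \<bullet> w"
    using symmetric_matrix_inner_commute[OF sym, of u w] w(3) by simp
  then have "u \<bullet> e = 0"
    using False u(2) by simp
  then show ?thesis
    using that u by blast
qed

lemma eigenvector_orthogonal_ones_for_second_eigenvalue:
  fixes A :: "real^'n::finite^'n"
  assumes sym: "transpose A = A" and nonneg: "\<And>i j. A $ i $ j \<ge> 0"
    and eig: "sorted_eigenvalues A lam" and "2 \<le> CARD('n)"
    and form_bound: "\<And>w. w \<bullet> ones = 0 \<Longrightarrow> w \<bullet> (A *v w) \<le> c * (w \<bullet> w)"
    and w: "w \<noteq> 0" "w \<bullet> ones = 0" "(c *\<^sub>R mat 1 - A) *v w = \<gamma> *\<^sub>R ones"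
    and singular: "det (c *\<^sub>R mat 1 - A) = 0"
  obtains v where "v \<noteq> 0" "A *v v = lam 1 *\<^sub>R v" "v \<bullet> ones = 0"
proof -
  have "transpose (c *\<^sub>R mat 1 - A) = c *\<^sub>R mat 1 - A"
    using sym by (simp add: transpose_def vec_eq_iff mat_def)
  then obtain v where v: "v \<noteq> 0" "(c *\<^sub>R mat 1 - A) *v v = 0" "v \<bullet> ones = 0"
    using symmetric_singular_kernel_meets_hyperplane singular w by blast
  then have Av: "A *v v = c *\<^sub>R v"
    by (simp add: scaleR_mat_1_diff_mult)
  have "c \<le> lam 1"
    using eigenvalue_of_eigenvector_orthogonal_ones_le_second[OF sym nonneg eig v(1) Av v(3)] .
  moreover have "lam 1 \<le> c"
  proof -
    obtain z where z: "z \<noteq> 0" "z \<bullet> ones = 0" "lam 1 * (z \<bullet> z) \<le> z \<bullet> (A *v z)"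
      using exists_orthogonal_vector_quadratic_form_ge_second_eigenvalue[OF sym eig \<open>2 \<le> CARD('n)\<close>]
      by blast
    then have "lam 1 * (z \<bullet> z) \<le> c * (z \<bullet> z)"
      using form_bound order_trans by blast
    then show ?thesis
      using z(1) by simp
  qed
  ultimately show ?thesis
    using that v Av by simp
qed

theorem lemma4p4:
  fixes E :: "'n::finite \<Rightarrow> 'n \<Rightarrow> bool" and d :: nat and k :: real
    and lam :: "nat \<Rightarrow> real"
  assumes "simple_graph E"
    and "CARD('n) = d + 2"
    and "sorted_eigenvalues (adj_matrix E) lam"
    and "k > 1"
    and "\<forall>w::real^'n. w \<bullet> ones = 0 \<longrightarrow>
           w \<bullet> (((1 / (k\<^sup>2 - 1)) *\<^sub>R mat 1 - adj_matrix E) *v w) \<ge> 0"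
    and "\<exists>w::real^'n. w \<noteq> 0 \<and> w \<bullet> ones = 0 \<and>
           (\<exists>\<gamma>::real. ((1 / (k\<^sup>2 - 1)) *\<^sub>R mat 1 - adj_matrix E) *v w = \<gamma> *\<^sub>R ones)"
    and "det ((1 / (k\<^sup>2 - 1)) *\<^sub>R mat 1 - adj_matrix E) = 0"
  shows "\<exists>v::real^'n. v \<noteq> 0 \<and> adj_matrix E *v v = lam 1 *\<^sub>R v \<and> v \<bullet> ones = 0"
proof -
  define A where "A = adj_matrix E"
  define c where "c = 1 / (k\<^sup>2 - 1)"
  have sym: "transpose A = A"
    using assms(1) by (simp add: A_def adj_matrix_def simple_graph_def transpose_def vec_eq_iff)
  have nonneg: "A $ i $ j \<ge> 0" for i j
    by (simp add: A_def adj_matrix_def)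
  have form_bound: "w \<bullet> (A *v w) \<le> c * (w \<bullet> w)" if "w \<bullet> ones = 0" for w
    using assms(5) that by (fastforce simp: A_def c_def scaleR_mat_1_diff_mult inner_diff_right)
  obtain w \<gamma> where w: "w \<noteq> 0" "w \<bullet> ones = 0" "(c *\<^sub>R mat 1 - A) *v w = \<gamma> *\<^sub>R ones"
    using assms(6) unfolding A_def[symmetric] c_def[symmetric] by blast
  have "sorted_eigenvalues A lam" "2 \<le> CARD('n)" "det (c *\<^sub>R mat 1 - A) = 0"
    using assms(2,3,7) by (simp_all add: A_def c_def)
  then show ?thesis
    using eigenvector_orthogonal_ones_for_second_eigenvalue[OF sym nonneg _ _ form_bound w]
    unfolding A_def by blast
qed

end
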